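(* Let $n \geq 0$ and $k \geq 1$ be integers and let $p=(p_1,p_2)$ be a probability distribution on two bins. Let $M_n$ be the maximum load of the two bins when $n$ balls are thrown independently, each landing in bin $i$ with probability $p_i$. Let $p' = (1-\|p\|_k,\ \|p\|_k)$, where $\|p\|_k = (p_1^k+p_2^k)^{1/k}$, and let $M'_n$ be the load of bin $2$ when $n$ balls are thrown independently according to $p'$. Then $\Pr[M_n \geq k] \geq \Pr[M'_n \geq k]$.
   Context: The load of a bin is the number of balls that landed in it. *)

theory Defs
  imports "HOL-Probability.Probability"
begin

definition bin_pmf :: "real \<Rightarrow> nat pmf" where
  "bin_pmf q = map_pmf (\<lambda>b. if b then 2 else 1) (bernoulli_pmf q)"

definition throw_pmf :: "nat \<Rightarrow> real \<Rightarrow> (nat \<Rightarrow> nat) pmf" where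
  "throw_pmf n q = Pi_pmf {..<n} 0 (\<lambda>_. bin_pmf q)"

definition load :: "nat \<Rightarrow> (nat \<Rightarrow> nat) \<Rightarrow> nat \<Rightarrow> nat" where
  "load n \<omega> i = card {j \<in> {..<n}. \<omega> j = i}"

definition knorm :: "nat \<Rightarrow> real \<Rightarrow> real \<Rightarrow> real" where
  "knorm k p1 p2 = (p1 ^ k + p2 ^ k) powr (1 / real k)"

end

theory Submission
  imports Defs
begin

(*
  Both sides reduce to binomial tails F(x) = P[Bin(n, x) \<ge> k]. The left side is 1 when
  n \<ge> 2k (pigeonhole); otherwise the events "bin 1 gets at least k balls" and "bin 2 gets at
  least k balls" are disjoint, so the left side is F(p1) + F(p2). The right side is F(q) with
  q^k = p1^k + p2^k, so it remains to show F(q) \<le> F(p1) + F(p2). As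
  F'(x) = n C(n-1,k-1) x^(k-1) (1-x)^(n-k), the function
  t \<mapsto> F(t p1) + F(t p2) - F(t q) vanishes at 0 and has derivative
  n C(n-1,k-1) t^(k-1) (p1^k (1-t p1)^(n-k) + p2^k (1-t p2)^(n-k) - q^k (1-t q)^(n-k)),
  which is nonnegative because q \<ge> p1, p2.
*)

definition binomial_tail :: "nat \<Rightarrow> nat \<Rightarrow> real \<Rightarrow> real" where
  "binomial_tail n k x = (\<Sum>j=k..n. Bernstein n j x)"

lemma Bernstein_has_real_derivative:
  assumes "1 \<le> j" "j \<le> n"
  shows "(Bernstein n j has_real_derivative
           real n * (Bernstein (n - 1) (j - 1) x - Bernstein (n - 1) j x)) (at x)"
proof -
  have "(Bernstein n j has_real_derivative
         real (n choose j) * (real j * x^(j - 1) * (1 - x)^(n - j)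
           - x^j * (real (n - j) * (1 - x)^(n - j - 1)))) (at x)"
    unfolding Bernstein_def[abs_def] by (rule derivative_eq_intros refl)+ (simp add: algebra_simps)
  also have "real (n choose j) * (real j * x^(j - 1) * (1 - x)^(n - j)
           - x^j * (real (n - j) * (1 - x)^(n - j - 1)))
      = real n * (Bernstein (n - 1) (j - 1) x - Bernstein (n - 1) j x)"
  proof -
    have "j * (n choose j) = n * ((n - 1) choose (j - 1))"
      using assms by (intro times_binomial_minus1_eq) simp
    then have absorb_j: "real j * real (n choose j) = real n * real ((n - 1) choose (j - 1))"
      by (metis of_nat_mult)
    have absorb_n_minus_j: "real (n - j) * real (n choose j) = real n * real ((n - 1) choose j)"
      using binomial_absorb_comp[of n j] by (metis of_nat_mult)
    have exponents: "n - 1 - (j - 1) = n - j" "n - 1 - j = n - j - 1"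
      using assms by auto
    have "real (n choose j) * (real j * x^(j - 1) * (1 - x)^(n - j)
           - x^j * (real (n - j) * (1 - x)^(n - j - 1)))
        = (real j * real (n choose j)) * x^(j - 1) * (1 - x)^(n - j)
          - (real (n - j) * real (n choose j)) * x^j * (1 - x)^(n - j - 1)"
      by (simp add: algebra_simps)
    then show ?thesis
      unfolding absorb_j absorb_n_minus_j Bernstein_def exponents by (simp add: algebra_simps)
  qed
  finally show ?thesis .
qed

lemma binomial_tail_has_real_derivative:
  assumes "1 \<le> k" "k \<le> n"
  shows "(binomial_tail n k has_real_derivative real n * Bernstein (n - 1) (k - 1) x) (at x)"
proof -
  define B where "B i = - real n * Bernstein (n - 1) i x" for i
  have "(binomial_tail n k has_real_derivative (\<Sum>j=k..n. B j - B (j - 1))) (at x)"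
    unfolding binomial_tail_def[abs_def]
  proof (rule DERIV_sum)
    fix j assume "j \<in> {k..n}"
    then show "(Bernstein n j has_real_derivative B j - B (j - 1)) (at x)"
      using Bernstein_has_real_derivative[of j n x] assms by (simp add: B_def algebra_simps)
  qed
  also have "(\<Sum>j=k..n. B j - B (j - 1)) = (\<Sum>i=k-1..n-1. B (Suc i) - B i)"
    using assms by (intro sum.reindex_bij_witness[where i=Suc and j="\<lambda>j. j - 1"]) auto
  also have "\<dots> = B n - B (k - 1)"
    using assms by (subst sum_Suc_diff) auto
  also have "B n - B (k - 1) = real n * Bernstein (n - 1) (k - 1) x"
    using assms by (simp add: B_def Bernstein_def)
  finally show ?thesis .
qed

lemma binomial_tail_scaled_has_real_derivative:
  assumes "1 \<le> k" "k \<le> n"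
  shows "((\<lambda>t. binomial_tail n k (t * c)) has_real_derivative
          real n * real ((n - 1) choose (k - 1)) * t ^ (k - 1) * (c ^ k * (1 - t * c) ^ (n - k))) (at t)"
proof -
  obtain k' where k': "k = Suc k'"
    using assms(1) by (cases k) auto
  have "((\<lambda>t. binomial_tail n k (t * c)) has_real_derivative
      real n * Bernstein (n - 1) (k - 1) (t * c) * c) (at t)"
  proof (rule DERIV_chain2[OF binomial_tail_has_real_derivative[OF assms]])
    show "((\<lambda>t. t * c) has_real_derivative c) (at t)"
      by (rule derivative_eq_intros refl)+ simp
  qed
  also have "real n * Bernstein (n - 1) (k - 1) (t * c) * c
      = real n * real ((n - 1) choose (k - 1)) * t ^ (k - 1) * (c ^ k * (1 - t * c) ^ (n - k))"
    using assms(2) by (simp add: k' Bernstein_def power_mult_distrib algebra_simps)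
  finally show ?thesis .
qed

lemma binomial_tail_subadditive:
  assumes k: "1 \<le> k" and p: "0 \<le> p1" "0 \<le> p2" and q: "0 \<le> q" "q \<le> 1"
    and qk: "q ^ k = p1 ^ k + p2 ^ k"
  shows "binomial_tail n k q \<le> binomial_tail n k p1 + binomial_tail n k p2"
proof (cases "k \<le> n")
  case False
  then show ?thesis by (simp add: binomial_tail_def)
next
  case True
  have "p1 ^ k \<le> q ^ k" "p2 ^ k \<le> q ^ k"
    using qk p by simp_all
  then have pq: "p1 \<le> q" "p2 \<le> q"
    using power_mono_iff[of _ q k] p q k by auto
  define C where "C = real n * real ((n - 1) choose (k - 1))"
  define e where "e t c = c ^ k * (1 - t * c) ^ (n - k)" for t c :: real
  define \<psi> where "\<psi> t = binomial_tail n k (t * p1) + binomial_tail n k (t * p2) - binomial_tail n k (t * q)" for t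
  have "\<psi> 0 \<le> \<psi> 1"
  proof (rule DERIV_nonneg_imp_nondecreasing[of 0 1])
    fix t :: real assume t: "0 \<le> t" "t \<le> 1"
    have "e t q = p1 ^ k * (1 - t * q) ^ (n - k) + p2 ^ k * (1 - t * q) ^ (n - k)"
      unfolding e_def qk by (simp add: algebra_simps)
    also have "\<dots> \<le> e t p1 + e t p2"
      unfolding e_def using t p q pq
      by (intro add_mono mult_left_mono power_mono) (auto intro: mult_left_mono mult_le_one)
    finally have "0 \<le> C * t ^ (k - 1) * (e t p1 + e t p2 - e t q)"
      using t by (simp add: C_def)
    moreover have "(\<psi> has_real_derivative C * t ^ (k - 1) * (e t p1 + e t p2 - e t q)) (at t)"
    proof -
      have "(\<psi> has_real_derivative C * t ^ (k - 1) * e t p1 + C * t ^ (k - 1) * e t p2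
          - C * t ^ (k - 1) * e t q) (at t)"
        unfolding \<psi>_def[abs_def] C_def e_def
        by (intro DERIV_diff DERIV_add binomial_tail_scaled_has_real_derivative k True)
      then show ?thesis
        by (simp add: algebra_simps)
    qed
    ultimately show "\<exists>y. (\<psi> has_real_derivative y) (at t) \<and> 0 \<le> y"
      by blast
  qed simp
  moreover have "binomial_tail n k 0 = 0"
    using k by (simp add: binomial_tail_def Bernstein_def)
  ultimately show ?thesis
    by (simp add: \<psi>_def)
qed

lemma Bernstein_symmetric:
  assumes "j \<le> n"
  shows "Bernstein n (n - j) x = Bernstein n j (1 - x)"
  using assms by (simp add: Bernstein_def binomial_symmetric[symmetric])

lemma prob_binomial_pmf_ge:
  assumes "0 \<le> p" "p \<le> 1"
  shows "measure_pmf.prob (binomial_pmf n p) {c. k \<le> c} = binomial_tail n k p"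
proof -
  have "measure_pmf.prob (binomial_pmf n p) {c. k \<le> c} = measure_pmf.prob (binomial_pmf n p) {k..n}"
    using assms by (intro measure_prob_cong_0) auto
  also have "\<dots> = binomial_tail n k p"
    using assms by (simp add: measure_measure_pmf_finite binomial_tail_def Bernstein_def)
  finally show ?thesis .
qed

lemma prob_binomial_pmf_ge_complement:
  assumes "0 \<le> p" "p \<le> 1"
  shows "measure_pmf.prob (binomial_pmf n p) {c. k \<le> n - c} = binomial_tail n k (1 - p)"
proof -
  have "(\<lambda>j. n - j) ` {k..n} = {c. c \<le> n \<and> k \<le> n - c}"
    by (auto simp: image_iff) (metis atLeastAtMost_iff diff_diff_cancel diff_le_self)
  then have "measure_pmf.prob (binomial_pmf n p) {c. k \<le> n - c}
      = measure_pmf.prob (binomial_pmf n p) ((\<lambda>j. n - j) ` {k..n})"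
    using assms by (intro measure_prob_cong_0) auto
  also have "\<dots> = (\<Sum>j=k..n. Bernstein n (n - j) p)"
  proof -
    have "inj_on (\<lambda>j. n - j) {k..n}"
      by (auto simp: inj_on_def)
    then show ?thesis
      using assms by (simp add: measure_measure_pmf_finite sum.reindex Bernstein_def)
  qed
  also have "\<dots> = binomial_tail n k (1 - p)"
    unfolding binomial_tail_def by (intro sum.cong) (simp_all add: Bernstein_symmetric)
  finally show ?thesis .
qed

lemma throw_pmf_eq_map_Pi_bernoulli:
  "throw_pmf n q = map_pmf (\<lambda>h j. if j \<in> {..<n} then (if h j then 2 else 1) else 0)
      (Pi_pmf {..<n} False (\<lambda>_. bernoulli_pmf q))"
proof -
  let ?bin = "\<lambda>b::bool. if b then 2 else (1::nat)"
  have "throw_pmf n q = map_pmf (\<lambda>f j. if j \<in> {..<n} then f j else 0)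
                     (Pi_pmf {..<n} 1 (\<lambda>_. map_pmf ?bin (bernoulli_pmf q)))"
    unfolding throw_pmf_def bin_pmf_def by (rule Pi_pmf_default_swap[symmetric]) simp
  also have "Pi_pmf {..<n} 1 (\<lambda>_. map_pmf ?bin (bernoulli_pmf q))
      = map_pmf (\<lambda>h. ?bin \<circ> h) (Pi_pmf {..<n} False (\<lambda>_. bernoulli_pmf q))"
    by (rule Pi_pmf_map) auto
  finally show ?thesis by (simp add: pmf.map_comp o_def)
qed

lemma prob_throw_pmf_loads:
  assumes "0 \<le> q" "q \<le> 1"
  shows "measure_pmf.prob (throw_pmf n q) {\<omega>. P (load n \<omega> 1) (load n \<omega> 2)}
       = measure_pmf.prob (binomial_pmf n q) {c. P (n - c) c}"
proof -
  let ?heads = "\<lambda>h::nat \<Rightarrow> bool. card {j \<in> {..<n}. h j}"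
  let ?bins = "\<lambda>(h::nat \<Rightarrow> bool) j. if j \<in> {..<n} then (if h j then 2 else 1) else (0::nat)"
  have load2: "load n (?bins h) 2 = ?heads h" for h
    unfolding load_def by (intro arg_cong[where f=card]) auto
  have "load n (?bins h) 1 = card ({..<n} - {j \<in> {..<n}. h j})" for h
    unfolding load_def by (intro arg_cong[where f=card]) auto
  then have load1: "load n (?bins h) 1 = n - ?heads h" for h
    by (subst (asm) card_Diff_subset) auto
  have binomial: "binomial_pmf n q = map_pmf ?heads (Pi_pmf {..<n} False (\<lambda>_. bernoulli_pmf q))"
    using assms by (intro binomial_pmf_altdef') auto
  show ?thesis
    unfolding throw_pmf_eq_map_Pi_bernoulli binomial measure_map_pmf vimage_def
    by (simp only: load1 load2 mem_Collect_eq)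
qed

lemma prob_load2_ge:
  assumes "0 \<le> q" "q \<le> 1"
  shows "measure_pmf.prob (throw_pmf n q) {\<omega>. k \<le> load n \<omega> 2} = binomial_tail n k q"
  using prob_throw_pmf_loads[of q n "\<lambda>_ l. k \<le> l"] prob_binomial_pmf_ge[of q n k] assms by simp

lemma prob_max_load_ge_pigeonhole:
  assumes "0 \<le> q" "q \<le> 1" "2 * k \<le> n"
  shows "measure_pmf.prob (throw_pmf n q) {\<omega>. k \<le> max (load n \<omega> 1) (load n \<omega> 2)} = 1"
proof -
  have "{c. k \<le> max (n - c) c} = UNIV"
    using assms(3) by auto
  then show ?thesis
    using prob_throw_pmf_loads[of q n "\<lambda>l1 l2. k \<le> max l1 l2"] assms by simp
qed

lemma prob_max_load_ge_disjoint:
  assumes "0 \<le> q" "q \<le> 1" "n < 2 * k"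
  shows "measure_pmf.prob (throw_pmf n q) {\<omega>. k \<le> max (load n \<omega> 1) (load n \<omega> 2)}
       = binomial_tail n k (1 - q) + binomial_tail n k q"
proof -
  have "{c. k \<le> max (n - c) c} = {c. k \<le> n - c} \<union> {c. k \<le> c}"
    by auto
  moreover have "{c. k \<le> n - c} \<inter> {c. k \<le> c} = {}"
    using assms(3) by auto
  ultimately show ?thesis
    using prob_throw_pmf_loads[of q n "\<lambda>l1 l2. k \<le> max l1 l2"] assms
    by (simp add: measure_pmf.finite_measure_Union prob_binomial_pmf_ge prob_binomial_pmf_ge_complement)
qed

lemma knorm_power:
  assumes "1 \<le> k" "0 \<le> p1" "0 \<le> p2"
  shows "knorm k p1 p2 ^ k = p1 ^ k + p2 ^ k"
proof (cases "p1 ^ k + p2 ^ k = 0")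
  case True
  then show ?thesis
    using assms(1) by (simp add: knorm_def)
next
  case False
  then show ?thesis
    using assms by (simp add: knorm_def powr_power)
qed

lemma knorm_le_1:
  assumes "1 \<le> k" "0 \<le> p1" "0 \<le> p2" "p1 + p2 = 1"
  shows "knorm k p1 p2 \<le> 1"
proof -
  have "p1 ^ k \<le> p1" "p2 ^ k \<le> p2"
    using assms power_decreasing[of 1 k] by fastforce+
  then have "knorm k p1 p2 ^ k \<le> 1"
    using assms by (simp add: knorm_power)
  then show ?thesis
    using assms(1) by (simp add: knorm_def power_le_one_iff)
qed

theorem lemma10:
  fixes n k :: nat and p1 p2 :: real
  assumes "k \<ge> 1" and "p1 \<ge> 0" and "p2 \<ge> 0" and "p1 + p2 = 1"
  shows "measure_pmf.prob (throw_pmf n p2)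
            {\<omega>. max (load n \<omega> 1) (load n \<omega> 2) \<ge> k}
       \<ge> measure_pmf.prob (throw_pmf n (knorm k p1 p2))
            {\<omega>. load n \<omega> 2 \<ge> k}"
proof -
  define q where "q = knorm k p1 p2"
  have q: "0 \<le> q" "q \<le> 1" "q ^ k = p1 ^ k + p2 ^ k"
    using assms knorm_le_1 knorm_power by (simp_all add: q_def knorm_def)
  have p2: "0 \<le> p2" "p2 \<le> 1" "1 - p2 = p1"
    using assms by auto
  show ?thesis
  proof (cases "2 * k \<le> n")
    case True
    then show ?thesis
      using prob_max_load_ge_pigeonhole[OF p2(1,2) True] by simp
  next
    case False
    have "binomial_tail n k q \<le> binomial_tail n k p1 + binomial_tail n k p2"
      using binomial_tail_subadditive assms q by blast
    then show ?thesis
      using prob_max_load_ge_disjoint[of p2 n k] prob_load2_ge[OF q(1,2)] p2 False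
      by (simp add: q_def)
  qed
qed

end
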